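(* Let $(G,b,x,2)$ be an instance of Collapsed $k$-Core with $k=2$ such that $G$ is its own $2$-core (every vertex of $G$ has degree at least $2$) and no connected component of $G$ is a cycle. If there is a set $B\subseteq V(G)$ with $|B|\le b$ such that the $2$-core of $G-B$ has at most $x$ vertices, then there is also a set $B'\subseteq V(G)$ with $|B'|\le b$ such that the $2$-core of $G-B'$ has at most $x$ vertices and every vertex of $B'$ has degree larger than $2$ in $G$.
   Context: For an integer $k$, the $k$-core of a graph $G$ is the (uniquely determined) largest induced subgraph of $G$ in which every vertex has degree at least $k$ (possibly empty); its size is its number of vertices. Collapsed $k$-Core: given an undirected graph $G=(V,E)$ and integers $b$, $x$, $k$, decide whether there is a set $S\subseteq V$ with $|S|\le b$ such that the $k$-core of $G-S$ has at most $x$ vertices. *)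

theory Defs
  imports Main
begin

definition graph :: "'a set \<Rightarrow> 'a set set \<Rightarrow> bool" where
  "graph V E \<longleftrightarrow> finite V \<and> (\<forall>e\<in>E. e \<subseteq> V \<and> card e = 2)"

definition nbrs_in :: "'a set set \<Rightarrow> 'a set \<Rightarrow> 'a \<Rightarrow> 'a set" where
  "nbrs_in E W v = {u\<in>W. {u, v} \<in> E}"

definition deg_in :: "'a set set \<Rightarrow> 'a set \<Rightarrow> 'a \<Rightarrow> nat" where
  "deg_in E W v = card (nbrs_in E W v)"

abbreviation degree :: "'a set \<Rightarrow> 'a set set \<Rightarrow> 'a \<Rightarrow> nat" where
  "degree V E v \<equiv> deg_in E V v"

text \<open>k-core of the graph (V,E): the largest W \<subseteq> V such that every vertex of the
  induced subgraph G[W] has degree at least k in G[W]. Such sets are closed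
  under union, so the largest one is the union of all of them.\<close>
definition k_core :: "nat \<Rightarrow> 'a set \<Rightarrow> 'a set set \<Rightarrow> 'a set" where
  "k_core k V E = \<Union>{W. W \<subseteq> V \<and> (\<forall>v\<in>W. deg_in E W v \<ge> k)}"

definition del_verts :: "'a set \<Rightarrow> 'a set set \<Rightarrow> 'a set \<Rightarrow> 'a set \<times> 'a set set" where
  "del_verts V E S = (V - S, {e\<in>E. e \<inter> S = {}})"

definition adj :: "'a set set \<Rightarrow> ('a \<times> 'a) set" where
  "adj E = {(u, v). {u, v} \<in> E}"

definition connected_component :: "'a set \<Rightarrow> 'a set set \<Rightarrow> 'a set \<Rightarrow> bool" where
  "connected_component V E C \<longleftrightarrow>
     (\<exists>v\<in>V. C = {u. (v, u) \<in> (adj E)\<^sup>*})"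

text \<open>A connected component C is a cycle iff the subgraph it induces is a
  cycle graph, i.e. a connected 2-regular simple graph (automatically on at
  least 3 vertices).\<close>
definition component_is_cycle :: "'a set \<Rightarrow> 'a set set \<Rightarrow> 'a set \<Rightarrow> bool" where
  "component_is_cycle V E C \<longleftrightarrow> connected_component V E C \<and> (\<forall>v\<in>C. deg_in E C v = 2)"

end

theory Submission
  imports Defs
begin

text \<open>Vertices of degree 2 form threads: maximal paths of degree-2 vertices,
  glued to the rest of the graph at vertices of degree at least 3. A vertex set
  inducing minimum degree 2 that meets a thread must contain the whole thread and
  its end vertices, since a degree-2 vertex can keep degree 2 only if both of its
  neighbours stay. As no component is a cycle, every thread has an end vertex u
  of degree at least 3, so deleting u instead of a degree-2 vertex v of the thread
  destroys at least as much of the 2-core. Repeating this exchange removes all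
  vertices of degree at most 2 from the solution.\<close>

abbreviation residual_core :: "nat \<Rightarrow> 'a set \<Rightarrow> 'a set set \<Rightarrow> 'a set \<Rightarrow> 'a set" where
  "residual_core k V E S \<equiv> k_core k (fst (del_verts V E S)) (snd (del_verts V E S))"

definition deg2_adj :: "'a set \<Rightarrow> 'a set set \<Rightarrow> ('a \<times> 'a) set" where
  "deg2_adj V E = {(p, q). {p, q} \<in> E \<and> degree V E p = 2 \<and> degree V E q = 2}"

lemma graph_edge_in_V: "graph V E \<Longrightarrow> {a, b} \<in> E \<Longrightarrow> a \<in> V \<and> b \<in> V"
  unfolding graph_def by blast

lemma residual_core_eq:
  "residual_core k V E S = \<Union>{W. W \<subseteq> V - S \<and> (\<forall>w\<in>W. k \<le> deg_in E W w)}"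
proof -
  have "nbrs_in {e\<in>E. e \<inter> S = {}} W w = nbrs_in E W w" if "W \<subseteq> V - S" "w \<in> W" for W w
    using that by (auto simp: nbrs_in_def)
  then have "{W. W \<subseteq> V - S \<and> (\<forall>w\<in>W. k \<le> deg_in {e\<in>E. e \<inter> S = {}} W w)} =
             {W. W \<subseteq> V - S \<and> (\<forall>w\<in>W. k \<le> deg_in E W w)}"
    by (auto simp: deg_in_def)
  then show ?thesis by (simp add: k_core_def del_verts_def)
qed

lemma residual_core_subset:
  assumes "\<And>W. W \<subseteq> V - S' \<Longrightarrow> \<forall>w\<in>W. k \<le> deg_in E W w \<Longrightarrow> W \<inter> S = {}"
  shows "residual_core k V E S' \<subseteq> residual_core k V E S"
  unfolding residual_core_eq using assms by (intro Union_mono) blast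

lemma nbrs_subset_if_degree_le:
  assumes g: "graph V E" and W: "W \<subseteq> V" and d: "degree V E y \<le> deg_in E W y"
  shows "nbrs_in E V y \<subseteq> W"
proof -
  have fin: "finite (nbrs_in E V y)" using g unfolding graph_def nbrs_in_def by auto
  have sub: "nbrs_in E W y \<subseteq> nbrs_in E V y" using W unfolding nbrs_in_def by auto
  moreover have "card (nbrs_in E V y) \<le> card (nbrs_in E W y)" using d by (simp add: deg_in_def)
  ultimately have "nbrs_in E W y = nbrs_in E V y"
    using card_subset_eq[OF fin] card_mono[OF fin] by (meson le_antisym)
  then show ?thesis by (auto simp: nbrs_in_def)
qed

lemma deg2_nbr_mem:
  assumes g: "graph V E" and W: "W \<subseteq> V" and P: "\<forall>w\<in>W. 2 \<le> deg_in E W w"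
    and yW: "y \<in> W" and dy: "degree V E y = 2" and e: "{y, z} \<in> E"
  shows "z \<in> W"
proof -
  have "z \<in> nbrs_in E V y"
    using e graph_edge_in_V[OF g e] by (simp add: nbrs_in_def insert_commute)
  moreover have "degree V E y \<le> deg_in E W y" using P yW dy by simp
  ultimately show ?thesis using nbrs_subset_if_degree_le[OF g W] by blast
qed

lemma deg2_adj_rtrancl_mem:
  assumes g: "graph V E" and W: "W \<subseteq> V" and P: "\<forall>w\<in>W. 2 \<le> deg_in E W w"
    and r: "(a, y) \<in> (deg2_adj V E)\<^sup>*" and a: "a \<in> W"
  shows "y \<in> W"
  using r
proof (induction rule: rtrancl_induct)
  case base
  show ?case using a .
next
  case (step y z)
  then have "degree V E y = 2" "{y, z} \<in> E" by (auto simp: deg2_adj_def)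
  then show ?case using deg2_nbr_mem[OF g W P step.IH] by blast
qed

lemma deg2_adj_rtrancl_degree:
  "(v, r) \<in> (deg2_adj V E)\<^sup>* \<Longrightarrow> degree V E v = 2 \<Longrightarrow> degree V E r = 2"
  by (induction rule: rtrancl_induct) (auto simp: deg2_adj_def)

text \<open>If the thread through v had no end of degree other than 2, the set reachable
  from v along degree-2 edges would be closed under all edges: a 2-regular component.\<close>
lemma deg2_thread_has_end:
  assumes g: "graph V E" and nc: "\<not> (\<exists>C. component_is_cycle V E C)"
    and vV: "v \<in> V" and dv: "degree V E v = 2"
  shows "\<exists>r u. (v, r) \<in> (deg2_adj V E)\<^sup>* \<and> {r, u} \<in> E \<and> degree V E u \<noteq> 2"
proof (rule ccontr)
  assume "\<not> ?thesis"
  then have no_end: "degree V E u = 2"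
    if "(v, r) \<in> (deg2_adj V E)\<^sup>*" "{r, u} \<in> E" for r u
    using that by blast
  define R where "R = {y. (v, y) \<in> (deg2_adj V E)\<^sup>*}"
  have closed: "z \<in> R" if "y \<in> R" "{y, z} \<in> E" for y z
  proof -
    have "(v, y) \<in> (deg2_adj V E)\<^sup>*" using that(1) by (simp add: R_def)
    moreover from this have "(y, z) \<in> deg2_adj V E"
      using that(2) deg2_adj_rtrancl_degree[OF _ dv, of y] no_end[of y z]
      by (simp add: deg2_adj_def)
    ultimately show ?thesis by (simp add: R_def rtrancl_into_rtrancl)
  qed
  have "deg2_adj V E \<subseteq> adj E" by (auto simp: deg2_adj_def adj_def)
  then have "R \<subseteq> {u. (v, u) \<in> (adj E)\<^sup>*}" using rtrancl_mono by (auto simp: R_def)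
  moreover have "y \<in> R" if "(v, y) \<in> (adj E)\<^sup>*" for y
    using that
  proof (induction rule: rtrancl_induct)
    case base
    show ?case by (simp add: R_def)
  next
    case (step y z)
    then show ?case using closed by (simp add: adj_def)
  qed
  ultimately have "connected_component V E R"
    using vV unfolding connected_component_def by blast
  moreover have "deg_in E R y = 2" if yR: "y \<in> R" for y
  proof -
    have "nbrs_in E R y = nbrs_in E V y"
    proof (intro set_eqI iffI)
      fix z assume "z \<in> nbrs_in E R y"
      then show "z \<in> nbrs_in E V y" using graph_edge_in_V[OF g] by (auto simp: nbrs_in_def)
    next
      fix z assume "z \<in> nbrs_in E V y"
      then have "{y, z} \<in> E" "z \<in> V" by (simp_all add: nbrs_in_def insert_commute)
      then show "z \<in> nbrs_in E R y" using closed[OF yR] by (simp add: nbrs_in_def insert_commute)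
    qed
    moreover have "degree V E y = 2" using yR deg2_adj_rtrancl_degree[OF _ dv] by (simp add: R_def)
    ultimately show ?thesis by (simp add: deg_in_def)
  qed
  ultimately show False using nc by (auto simp: component_is_cycle_def)
qed

lemma exchange_deg2_vertex:
  assumes g: "graph V E" and md: "\<forall>v\<in>V. degree V E v \<ge> 2"
    and nc: "\<not> (\<exists>C. component_is_cycle V E C)"
    and B: "B \<subseteq> V" and vB: "v \<in> B" and dv: "degree V E v \<le> 2"
  obtains u where "u \<in> V" "degree V E u > 2"
    "residual_core 2 V E (insert u (B - {v})) \<subseteq> residual_core 2 V E B"
proof -
  have vV: "v \<in> V" using B vB by blast
  then have dv2: "degree V E v = 2" using dv md by force
  obtain r u where r: "(v, r) \<in> (deg2_adj V E)\<^sup>*" and e: "{r, u} \<in> E"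
    and du: "degree V E u \<noteq> 2"
    using deg2_thread_has_end[OF g nc vV dv2] by blast
  have uV: "u \<in> V" using graph_edge_in_V[OF g e] by blast
  have "W \<inter> B = {}" if W: "W \<subseteq> V - insert u (B - {v})" and P: "\<forall>w\<in>W. 2 \<le> deg_in E W w" for W
  proof -
    have WV: "W \<subseteq> V" using W by blast
    have "v \<notin> W"
    proof
      assume "v \<in> W"
      then have "r \<in> W" using deg2_adj_rtrancl_mem[OF g WV P r] by blast
      then have "u \<in> W" using deg2_nbr_mem[OF g WV P _ _ e] deg2_adj_rtrancl_degree[OF r dv2] by blast
      then show False using W by blast
    qed
    then show ?thesis using W by blast
  qed
  then have "residual_core 2 V E (insert u (B - {v})) \<subseteq> residual_core 2 V E B"
    by (rule residual_core_subset)
  moreover have "degree V E u > 2" using du md uV by force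
  ultimately show thesis using that uV by blast
qed

lemma solution_avoiding_low_degree:
  assumes g: "graph V E" and md: "\<forall>v\<in>V. degree V E v \<ge> 2"
    and nc: "\<not> (\<exists>C. component_is_cycle V E C)" and B: "B \<subseteq> V"
  shows "\<exists>B'. B' \<subseteq> V \<and> card B' \<le> card B \<and>
    residual_core 2 V E B' \<subseteq> residual_core 2 V E B \<and> (\<forall>v\<in>B'. degree V E v > 2)"
  using B
proof (induction B rule: measure_induct_rule[of "\<lambda>B. card {w\<in>B. degree V E w \<le> 2}"])
  case (less B)
  have finB: "finite B" using less.prems g finite_subset by (auto simp: graph_def)
  show ?case
  proof (cases "\<exists>v\<in>B. degree V E v \<le> 2")
    case False
    then have "\<forall>v\<in>B. degree V E v > 2" by auto
    then show ?thesis using less.prems by blast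
  next
    case True
    then obtain v where vB: "v \<in> B" and dv: "degree V E v \<le> 2" by blast
    obtain u where uV: "u \<in> V" and du: "degree V E u > 2"
      and core: "residual_core 2 V E (insert u (B - {v})) \<subseteq> residual_core 2 V E B"
      using exchange_deg2_vertex[OF g md nc less.prems vB dv] .
    define B1 where "B1 = insert u (B - {v})"
    have "card B1 \<le> Suc (card (B - {v}))"
      unfolding B1_def using finB by (simp add: card_insert_if)
    also have "\<dots> = card B" using finB vB by (rule card_Suc_Diff1)
    finally have card_B1: "card B1 \<le> card B" .
    have "{w\<in>B1. degree V E w \<le> 2} \<subset> {w\<in>B. degree V E w \<le> 2}"
      using vB dv du by (auto simp: B1_def)
    then have fewer_low: "card {w\<in>B1. degree V E w \<le> 2} < card {w\<in>B. degree V E w \<le> 2}"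
      using finB by (intro psubset_card_mono) auto
    have "B1 \<subseteq> V" using less.prems uV by (auto simp: B1_def)
    from less.IH[OF fewer_low this] obtain B' where B': "B' \<subseteq> V" "card B' \<le> card B1"
      "residual_core 2 V E B' \<subseteq> residual_core 2 V E B1" "\<forall>v\<in>B'. degree V E v > 2"
      by blast
    have "card B' \<le> card B" using B'(2) card_B1 by (rule order_trans)
    moreover have "residual_core 2 V E B' \<subseteq> residual_core 2 V E B"
      using B'(3) core unfolding B1_def by (rule order_trans)
    ultimately show ?thesis using B'(1,4) by blast
  qed
qed

theorem mainTheorem7:
  fixes V :: "'a set" and E :: "'a set set" and b x :: nat
  assumes "graph V E"
    and "\<forall>v\<in>V. degree V E v \<ge> 2"
    and "\<not> (\<exists>C. component_is_cycle V E C)"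
    and "\<exists>B. B \<subseteq> V \<and> card B \<le> b \<and>
           card (k_core 2 (fst (del_verts V E B)) (snd (del_verts V E B))) \<le> x"
  shows "\<exists>B'. B' \<subseteq> V \<and> card B' \<le> b \<and>
           card (k_core 2 (fst (del_verts V E B')) (snd (del_verts V E B'))) \<le> x \<and>
           (\<forall>v\<in>B'. degree V E v > 2)"
proof -
  obtain B where B: "B \<subseteq> V" "card B \<le> b" "card (residual_core 2 V E B) \<le> x"
    using assms(4) by blast
  obtain B' where B': "B' \<subseteq> V" "card B' \<le> card B"
    "residual_core 2 V E B' \<subseteq> residual_core 2 V E B" "\<forall>v\<in>B'. degree V E v > 2"
    using solution_avoiding_low_degree[OF assms(1-3) B(1)] by blast
  have "finite (residual_core 2 V E B)"
    using assms(1) by (auto simp: residual_core_eq graph_def intro: finite_subset)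
  then have "card (residual_core 2 V E B') \<le> x"
    using card_mono[OF _ B'(3)] B(3) by linarith
  then show ?thesis using B B' by auto
qed

end
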